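(* Let $H$ be a numerical semigroup, $k$ a field, and $R=k[H]$ its semigroup ring. Suppose $R$ is a Gorenstein ring (equivalently, $H$ is symmetric). Then $$\#\{I \mid I \text{ is a graded ideal of } R \text{ such that } R/I \text{ is Gorenstein and } \mu_R(I)\ge 2\} = \mathrm{c}(H).$$
   Context: A numerical semigroup is a submonoid $H\subseteq \mathbb{N}$ (with $0\in H$, closed under addition) with $\mathbb{N}\setminus H$ finite; write $H=\langle a_1,\dots,a_\ell\rangle$ with $\gcd(a_1,\dots,a_\ell)=1$. The semigroup ring is $R=k[H]=k[t^h\mid h\in H]\subseteq k[t]$ ($t$ an indeterminate), graded by $\deg t=1$, so $R_n=kt^n$ if $n\in H$ and $R_n=0$ otherwise. "Graded ideal" means homogeneous ideal for this grading. The conductor is $\mathrm{c}(H)=\min\{n\in\mathbb{Z}\mid m\in H \text{ for all integers } m\ge n\}$. $H$ is symmetric if $\#\{n\in H\mid n<\mathrm{c}(H)\}=\#(\mathbb{N}\setminus H)$. $\mu_R(I)$ denotes the minimal number of generators of $I$. *)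

theory Defs
  imports "HOL-Computational_Algebra.Polynomial"
begin

definition numerical_semigroup :: "nat set \<Rightarrow> bool" where
  "numerical_semigroup H \<longleftrightarrow>
     0 \<in> H \<and> (\<forall>a\<in>H. \<forall>b\<in>H. a + b \<in> H) \<and> finite (UNIV - H)"

definition conductor :: "nat set \<Rightarrow> nat" where
  "conductor H = (LEAST n. \<forall>m\<ge>n. m \<in> H)"

definition symmetric_sg :: "nat set \<Rightarrow> bool" where
  "symmetric_sg H \<longleftrightarrow> card {n \<in> H. n < conductor H} = card (UNIV - H)"

definition semigroup_ring :: "nat set \<Rightarrow> 'a::field poly set" where
  "semigroup_ring H = {p. \<forall>n. coeff p n \<noteq> 0 \<longrightarrow> n \<in> H}"

definition ideal_of :: "'a::field poly set \<Rightarrow> 'a poly set \<Rightarrow> bool" where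
  "ideal_of R I \<longleftrightarrow> I \<subseteq> R \<and> 0 \<in> I \<and> (\<forall>x\<in>I. \<forall>y\<in>I. x + y \<in> I)
     \<and> (\<forall>r\<in>R. \<forall>x\<in>I. r * x \<in> I)"

definition graded_ideal :: "'a::field poly set \<Rightarrow> 'a poly set \<Rightarrow> bool" where
  "graded_ideal R I \<longleftrightarrow> ideal_of R I \<and> (\<forall>p\<in>I. \<forall>n. monom (coeff p n) n \<in> I)"

definition ideal_gen :: "'a::field poly set \<Rightarrow> 'a poly set \<Rightarrow> 'a poly set" where
  "ideal_gen R S = {p. \<exists>f. (\<forall>s\<in>S. f s \<in> R) \<and> p = (\<Sum>s\<in>S. f s * s)}"

definition mu :: "'a::field poly set \<Rightarrow> 'a poly set \<Rightarrow> nat" where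
  "mu R I = (LEAST n. \<exists>S. finite S \<and> S \<subseteq> I \<and> card S = n \<and> ideal_gen R S = I)"

definition max_ideal :: "'a::field poly set \<Rightarrow> 'a poly set" where
  "max_ideal R = {p \<in> R. coeff p 0 = 0}"

text \<open>Preimage in R of the socle (0 :_{R/I} m) of R/I.\<close>
definition socle_pre :: "'a::field poly set \<Rightarrow> 'a poly set \<Rightarrow> 'a poly set" where
  "socle_pre R I = {p \<in> R. \<forall>q\<in>max_ideal R. p * q \<in> I}"

text \<open>Gorenstein property of the Artinian local ring R/I (I a nonzero proper
  graded ideal): the socle of R/I is a one-dimensional k-vector space.\<close>
definition gorenstein_quot :: "'a::field poly set \<Rightarrow> 'a poly set \<Rightarrow> bool" where
  "gorenstein_quot R I \<longleftrightarrow>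
     (\<exists>s\<in>socle_pre R I. s \<notin> I \<and> (\<forall>p\<in>socle_pre R I. \<exists>c. p - smult c s \<in> I))"

end

theory Submission
  imports Defs
begin

(*
  A graded ideal of k[H] is spanned by the monomials t^e with e in a semigroup ideal E of H,
  and the socle of R/I is then spanned by the t^s with s in H - E and s + (H - {0}) in E.
  So R/I is Gorenstein iff there is exactly one such s = n, and then E must consist of the
  elements of H that do not divide n in H; the Gorenstein graded ideals thus correspond
  bijectively to the elements n of H. Such an ideal is principal iff E = b + H, which forces
  n = F + b with F = c - 1 the Frobenius number; conversely, for n = F + b with b in H,
  symmetry (n - m a gap implies F - (n - m) in H) shows that E = b + H. The remaining n are
  the elements of H below c together with the numbers F + g for the gaps g: c of them.
*)

lemma numerical_semigroup_zero: "numerical_semigroup H \<Longrightarrow> 0 \<in> H"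
  by (simp add: numerical_semigroup_def)

lemma numerical_semigroup_add:
  "numerical_semigroup H \<Longrightarrow> a \<in> H \<Longrightarrow> b \<in> H \<Longrightarrow> a + b \<in> H"
  by (simp add: numerical_semigroup_def)

lemma mem_if_conductor_le:
  assumes "numerical_semigroup H" "conductor H \<le> m"
  shows "m \<in> H"
proof -
  have "finite (UNIV - H)" using assms(1) by (simp add: numerical_semigroup_def)
  then obtain N where N: "UNIV - H \<subseteq> {..<N}" by (blast dest: finite_nat_bounded)
  have "\<forall>x\<ge>N. x \<in> H"
  proof (intro allI impI)
    fix x assume "N \<le> x"
    then have "x \<notin> {..<N}" by simp
    with N show "x \<in> H" by blast
  qed
  then have "\<forall>m\<ge>conductor H. m \<in> H" unfolding conductor_def by (rule LeastI)
  with assms(2) show ?thesis by blast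
qed

lemma gap_less_conductor: "numerical_semigroup H \<Longrightarrow> m \<notin> H \<Longrightarrow> m < conductor H"
  using mem_if_conductor_le not_le by blast

lemma frobenius_not_mem:
  assumes "numerical_semigroup H" "0 < conductor H"
  shows "conductor H - 1 \<notin> H"
proof
  assume "conductor H - 1 \<in> H"
  moreover have "m = conductor H - 1 \<or> conductor H \<le> m" if "conductor H - 1 \<le> m" for m
    using that by linarith
  ultimately have "\<forall>m\<ge>conductor H - 1. m \<in> H"
    using mem_if_conductor_le[OF assms(1)] by blast
  then have "conductor H \<le> conductor H - 1" unfolding conductor_def by (rule Least_le)
  with assms(2) show False by simp
qed

lemma card_below_conductor_plus_gaps:
  assumes "numerical_semigroup H"
  shows "card {n \<in> H. n < conductor H} + card (UNIV - H) = conductor H"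
proof -
  have "card {..<conductor H} = card ({..<conductor H} \<inter> H) + card ({..<conductor H} - H)"
    by (rule card_Int_Diff) simp
  moreover have "{..<conductor H} \<inter> H = {n \<in> H. n < conductor H}" by auto
  moreover have "{..<conductor H} - H = UNIV - H"
    using gap_less_conductor[OF assms] by auto
  ultimately show ?thesis by simp
qed

lemma symmetric_sg_gap_reflect:
  assumes ns: "numerical_semigroup H" and sym: "symmetric_sg H" and y: "y \<notin> H"
  shows "y \<le> conductor H - 1 \<and> conductor H - 1 - y \<in> H"
proof -
  define F where "F = conductor H - 1"
  define A where "A = {n \<in> H. n < conductor H}"
  have F: "F \<notin> H"
    using frobenius_not_mem[OF ns] gap_less_conductor[OF ns y] by (simp add: F_def)
  have "F - h \<notin> H" if "h \<in> A" for h
  proof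
    assume "F - h \<in> H"
    then have "h + (F - h) \<in> H"
      using numerical_semigroup_add[OF ns] that by (simp add: A_def)
    moreover have "h + (F - h) = F" using that by (auto simp: A_def F_def)
    ultimately show False using F by simp
  qed
  then have into_gaps: "(\<lambda>h. F - h) ` A \<subseteq> UNIV - H" by blast
  have "inj_on (\<lambda>h. F - h) A" by (rule inj_onI) (auto simp: A_def F_def)
  then have "card ((\<lambda>h. F - h) ` A) = card A" by (rule card_image)
  also have "\<dots> = card (UNIV - H)" using sym by (simp add: symmetric_sg_def A_def)
  finally have "(\<lambda>h. F - h) ` A = UNIV - H"
    using ns by (intro card_subset_eq[OF _ into_gaps]) (simp_all add: numerical_semigroup_def)
  with y obtain h where "h \<in> A" "y = F - h" by blast
  then show ?thesis by (auto simp: A_def F_def)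
qed

section \<open>Graded ideals as semigroup ideals\<close>

definition monomial_span :: "nat set \<Rightarrow> 'a::field poly set" where
  "monomial_span E = {p. \<forall>n. coeff p n \<noteq> 0 \<longrightarrow> n \<in> E}"

definition semigroup_ideal :: "nat set \<Rightarrow> nat set \<Rightarrow> bool" where
  "semigroup_ideal H E \<longleftrightarrow> E \<subseteq> H \<and> (\<forall>e\<in>E. \<forall>h\<in>H. e + h \<in> E)"

lemma semigroup_ring_eq_monomial_span: "semigroup_ring H = monomial_span H"
  by (simp add: semigroup_ring_def monomial_span_def)

lemma monom_mem_monomial_span_iff [simp]: "monom c n \<in> monomial_span E \<longleftrightarrow> c = 0 \<or> n \<in> E"
  by (auto simp: monomial_span_def)

lemma coeff_eq_0_if_notin_monomial_span:
  "p \<in> monomial_span E \<Longrightarrow> n \<notin> E \<Longrightarrow> coeff p n = 0"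
  by (auto simp: monomial_span_def)

lemma monomial_span_mono: "E \<subseteq> F \<Longrightarrow> monomial_span E \<subseteq> monomial_span F"
  by (auto simp: monomial_span_def)

lemma monomial_span_inject:
  "monomial_span E = (monomial_span F :: 'a::field poly set) \<longleftrightarrow> E = F"
proof
  assume "monomial_span E = (monomial_span F :: 'a poly set)"
  then have "monom (1::'a) n \<in> monomial_span E \<longleftrightarrow> monom (1::'a) n \<in> monomial_span F" for n
    by simp
  then show "E = F" by auto
qed simp

lemma zero_mem_monomial_span [simp]: "0 \<in> monomial_span E"
  by (simp add: monomial_span_def)

lemma one_mem_monomial_span: "0 \<in> E \<Longrightarrow> 1 \<in> monomial_span E"
  by (simp add: monomial_span_def coeff_1)

lemma add_mem_monomial_span:
  "p \<in> monomial_span E \<Longrightarrow> q \<in> monomial_span E \<Longrightarrow> p + q \<in> monomial_span E"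
  by (auto simp: monomial_span_def) (metis add.right_neutral)

lemma coeff_mult_neq_0_obtain:
  assumes "coeff (p * q) n \<noteq> 0"
  obtains i where "i \<le> n" "coeff p i \<noteq> 0" "coeff q (n - i) \<noteq> 0"
  using assms unfolding coeff_mult
  by (metis (no_types, lifting) atMost_iff mult_zero_left mult_zero_right sum.neutral)

lemma mult_mem_monomial_span:
  assumes "semigroup_ideal H E" "r \<in> monomial_span H" "p \<in> monomial_span E"
  shows "r * p \<in> monomial_span E"
  unfolding monomial_span_def
proof (intro CollectI allI impI)
  fix n assume "coeff (r * p) n \<noteq> 0"
  then obtain i where "i \<le> n" "coeff r i \<noteq> 0" "coeff p (n - i) \<noteq> 0"
    by (rule coeff_mult_neq_0_obtain)
  then have "n - i \<in> E" "i \<in> H"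
    using assms(2,3) by (auto simp: monomial_span_def)
  then have "(n - i) + i \<in> E"
    using assms(1) by (simp add: semigroup_ideal_def)
  with \<open>i \<le> n\<close> show "n \<in> E" by simp
qed

lemma semigroup_ideal_self: "numerical_semigroup H \<Longrightarrow> semigroup_ideal H H"
  by (simp add: semigroup_ideal_def numerical_semigroup_def)

lemma
  assumes "ideal_of R I"
  shows ideal_of_subset: "I \<subseteq> R"
    and ideal_of_zero: "0 \<in> I"
    and ideal_of_add: "x \<in> I \<Longrightarrow> y \<in> I \<Longrightarrow> x + y \<in> I"
    and ideal_of_mult: "r \<in> R \<Longrightarrow> x \<in> I \<Longrightarrow> r * x \<in> I"
  using assms by (auto simp: ideal_of_def)

lemma ideal_of_monomial_span:
  assumes "semigroup_ideal H E"
  shows "ideal_of (semigroup_ring H) (monomial_span E)"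
  using mult_mem_monomial_span[OF assms] monomial_span_mono[of E H] assms
  unfolding ideal_of_def semigroup_ring_eq_monomial_span semigroup_ideal_def
  by (auto intro: add_mem_monomial_span)

lemma ideal_of_sum:
  assumes "ideal_of R I" "\<And>i. i \<in> A \<Longrightarrow> f i \<in> I"
  shows "sum f A \<in> I"
proof (cases "finite A")
  case True
  then show ?thesis using assms(2)
    by (induction A rule: finite_induct)
      (simp_all add: ideal_of_zero[OF assms(1)] ideal_of_add[OF assms(1)])
qed (simp add: ideal_of_zero[OF assms(1)])

lemma monomial_span_subset_ideal:
  fixes I :: "'a::field poly set"
  assumes "0 \<in> H" "ideal_of (semigroup_ring H) I" "\<And>n. n \<in> E \<Longrightarrow> monom 1 n \<in> I"
  shows "monomial_span E \<subseteq> I"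
proof
  fix p :: "'a poly" assume p: "p \<in> monomial_span E"
  have terms: "monom (coeff p i) i \<in> I" for i
  proof (cases "coeff p i = 0")
    case True
    then show ?thesis using assms(2) by (simp add: ideal_of_zero)
  next
    case False
    then have "monom 1 i \<in> I" using p assms(3) by (simp add: monomial_span_def)
    moreover have "monom (coeff p i) 0 \<in> semigroup_ring H"
      using assms(1) by (simp add: semigroup_ring_eq_monomial_span)
    ultimately have "monom (coeff p i) 0 * monom 1 i \<in> I"
      using assms(2) by (simp add: ideal_of_mult)
    then show ?thesis by (simp add: mult_monom)
  qed
  have "(\<Sum>i\<le>degree p. monom (coeff p i) i) \<in> I"
    by (rule ideal_of_sum[OF assms(2) terms])
  then show "p \<in> I" by (simp add: poly_as_sum_of_monoms)
qed

lemma graded_ideal_eq_monomial_span: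
  fixes I :: "'a::field poly set"
  assumes ns: "numerical_semigroup H" and graded: "graded_ideal (semigroup_ring H) I"
  defines "E \<equiv> {n. monom (1::'a) n \<in> I}"
  shows "semigroup_ideal H E \<and> I = monomial_span E"
proof -
  have ideal: "ideal_of (semigroup_ring H) I"
    using graded by (simp add: graded_ideal_def)
  have H0: "0 \<in> H" by (rule numerical_semigroup_zero[OF ns])
  have monom_mult: "monom c m * x \<in> I" if "m \<in> H" "x \<in> I" for c m x
    using ideal that by (simp add: ideal_of_mult semigroup_ring_eq_monomial_span)
  have "semigroup_ideal H E"
    unfolding semigroup_ideal_def
  proof (intro conjI subsetI ballI)
    fix n assume "n \<in> E"
    then have "monom (1::'a) n \<in> semigroup_ring H"
      using ideal_of_subset[OF ideal] by (auto simp: E_def)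
    then show "n \<in> H" by (simp add: semigroup_ring_eq_monomial_span)
  next
    fix e h assume "e \<in> E" "h \<in> H"
    then have "monom 1 h * monom (1::'a) e \<in> I" using monom_mult by (simp add: E_def)
    then show "e + h \<in> E" by (simp add: E_def mult_monom add.commute)
  qed
  moreover have "I \<subseteq> monomial_span E"
  proof (intro subsetI, unfold monomial_span_def, intro CollectI allI impI)
    fix p n assume "p \<in> I" "coeff p n \<noteq> 0"
    then have "monom (coeff p n) n \<in> I"
      using graded by (simp add: graded_ideal_def)
    then have "monom (inverse (coeff p n)) 0 * monom (coeff p n) n \<in> I"
      by (rule monom_mult[OF H0])
    with \<open>coeff p n \<noteq> 0\<close> show "n \<in> E" by (simp add: E_def mult_monom)
  qed
  moreover have "monomial_span E \<subseteq> I"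
    using H0 ideal by (rule monomial_span_subset_ideal) (simp add: E_def)
  ultimately show ?thesis by blast
qed

lemma graded_ideal_iff_monomial_span:
  fixes I :: "'a::field poly set"
  assumes "numerical_semigroup H"
  shows "graded_ideal (semigroup_ring H) I
    \<longleftrightarrow> (\<exists>E. semigroup_ideal H E \<and> I = monomial_span E)"
proof
  assume "graded_ideal (semigroup_ring H) I"
  then show "\<exists>E. semigroup_ideal H E \<and> I = monomial_span E"
    using graded_ideal_eq_monomial_span[OF assms] by blast
next
  assume "\<exists>E. semigroup_ideal H E \<and> I = monomial_span E"
  then obtain E where E: "semigroup_ideal H E" "I = monomial_span E" by blast
  have "monom (coeff p n) n \<in> I" if "p \<in> I" for p n
    using that E(2) by (auto simp: monomial_span_def)
  with E ideal_of_monomial_span[OF E(1)] show "graded_ideal (semigroup_ring H) I"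
    by (simp add: graded_ideal_def)
qed

lemma ideal_gen_subset:
  assumes "ideal_of R I" "S \<subseteq> I"
  shows "ideal_gen R S \<subseteq> I"
proof
  fix p assume "p \<in> ideal_gen R S"
  then obtain f where f: "\<forall>s\<in>S. f s \<in> R" and p: "p = (\<Sum>s\<in>S. f s * s)"
    by (auto simp: ideal_gen_def)
  have "f s * s \<in> I" if "s \<in> S" for s
    using that f assms by (blast intro: ideal_of_mult)
  then show "p \<in> I" unfolding p by (rule ideal_of_sum[OF assms(1)])
qed

lemma ideal_of_ideal_gen:
  fixes S :: "'a::field poly set"
  assumes "numerical_semigroup H" "S \<subseteq> semigroup_ring H"
  shows "ideal_of (semigroup_ring H) (ideal_gen (semigroup_ring H) S)"
proof -
  let ?R = "semigroup_ring H :: 'a poly set"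
  have ring: "ideal_of ?R ?R"
    using ideal_of_monomial_span[OF semigroup_ideal_self[OF assms(1)]]
    by (simp add: semigroup_ring_eq_monomial_span)
  have "ideal_gen ?R S \<subseteq> ?R"
    using ideal_gen_subset[OF ring assms(2)] .
  moreover have "0 \<in> ideal_gen ?R S"
    using ideal_of_zero[OF ring] unfolding ideal_gen_def by (auto intro!: exI[of _ "\<lambda>_. 0"])
  moreover have "p + q \<in> ideal_gen ?R S" if p: "p \<in> ideal_gen ?R S" and q: "q \<in> ideal_gen ?R S"
    for p q
  proof -
    obtain f where "\<forall>s\<in>S. f s \<in> ?R" "p = (\<Sum>s\<in>S. f s * s)"
      using p unfolding ideal_gen_def by blast
    moreover obtain g where "\<forall>s\<in>S. g s \<in> ?R" "q = (\<Sum>s\<in>S. g s * s)"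
      using q unfolding ideal_gen_def by blast
    ultimately show ?thesis unfolding ideal_gen_def
      by (intro CollectI exI[of _ "\<lambda>s. f s + g s"])
        (simp add: ideal_of_add[OF ring] sum.distrib distrib_right)
  qed
  moreover have "r * p \<in> ideal_gen ?R S" if "r \<in> ?R" and p: "p \<in> ideal_gen ?R S" for r p
  proof -
    obtain f where "\<forall>s\<in>S. f s \<in> ?R" "p = (\<Sum>s\<in>S. f s * s)"
      using p unfolding ideal_gen_def by blast
    then show ?thesis unfolding ideal_gen_def
      by (intro CollectI exI[of _ "\<lambda>s. r * f s"])
        (simp add: ideal_of_mult[OF ring] \<open>r \<in> ?R\<close> sum_distrib_left mult.assoc)
  qed
  ultimately show ?thesis by (simp add: ideal_of_def)
qed

lemma mem_ideal_gen:
  fixes S :: "'a::field poly set"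
  assumes "numerical_semigroup H" "finite S" "s \<in> S"
  shows "s \<in> ideal_gen (semigroup_ring H) S"
proof -
  let ?f = "\<lambda>x. if x = s then 1 else 0 :: 'a poly"
  have "\<forall>x\<in>S. ?f x \<in> semigroup_ring H"
    by (simp add: semigroup_ring_eq_monomial_span one_mem_monomial_span
        numerical_semigroup_zero[OF assms(1)])
  moreover have "(\<Sum>x\<in>S. ?f x * x) = (\<Sum>x\<in>S. if x = s then x else 0)"
    by (rule sum.cong) simp_all
  then have "s = (\<Sum>x\<in>S. ?f x * x)"
    using assms(2,3) by simp
  ultimately show ?thesis unfolding ideal_gen_def by (intro CollectI exI[of _ ?f]) simp
qed

lemma ideal_gen_singleton: "ideal_gen R {p} = {r * p |r. r \<in> R}"
  by (auto simp: ideal_gen_def)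

lemma ideal_gen_monoms:
  fixes G :: "nat set"
  assumes ns: "numerical_semigroup H" and E: "semigroup_ideal H E"
    and G: "finite G" "G \<subseteq> E" and cover: "\<And>m. m \<in> E \<Longrightarrow> \<exists>g\<in>G. g \<le> m \<and> m - g \<in> H"
  shows "ideal_gen (semigroup_ring H) ((\<lambda>g. monom 1 g) ` G)
    = (monomial_span E :: 'a::field poly set)"
proof
  let ?S = "(\<lambda>g. monom (1::'a) g) ` G"
  have S_span: "?S \<subseteq> monomial_span E" using G(2) by auto
  then show "ideal_gen (semigroup_ring H) ?S \<subseteq> monomial_span E"
    by (rule ideal_gen_subset[OF ideal_of_monomial_span[OF E]])
  have "?S \<subseteq> semigroup_ring H"
    using S_span monomial_span_mono[of E H] E
    by (auto simp: semigroup_ideal_def semigroup_ring_eq_monomial_span)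
  note J = ideal_of_ideal_gen[OF ns this]
  show "monomial_span E \<subseteq> ideal_gen (semigroup_ring H) ?S"
  proof (rule monomial_span_subset_ideal[OF numerical_semigroup_zero[OF ns] J])
    fix n assume "n \<in> E"
    then obtain g where g: "g \<in> G" "g \<le> n" "n - g \<in> H" using cover by blast
    have "monom 1 (n - g) * monom 1 g \<in> ideal_gen (semigroup_ring H) ?S"
      using g by (intro ideal_of_mult[OF J] mem_ideal_gen[OF ns])
        (simp_all add: G semigroup_ring_eq_monomial_span)
    then show "monom 1 n \<in> ideal_gen (semigroup_ring H) ?S"
      using g(2) by (simp add: mult_monom)
  qed
qed

lemma semigroup_ideal_finite_cover:
  assumes ns: "numerical_semigroup H" and "e \<in> E"
  obtains G where "finite G" "G \<subseteq> E" "\<And>m. m \<in> E \<Longrightarrow> \<exists>g\<in>G. g \<le> m \<and> m - g \<in> H"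
proof
  let ?G = "{g \<in> E. g \<le> e + conductor H}"
  show "finite ?G" "?G \<subseteq> E" by auto
  fix m assume "m \<in> E"
  show "\<exists>g\<in>?G. g \<le> m \<and> m - g \<in> H"
  proof (cases "m \<le> e + conductor H")
    case True
    with \<open>m \<in> E\<close> show ?thesis using numerical_semigroup_zero[OF ns] by auto
  next
    case False
    then have "m - e \<in> H" by (intro mem_if_conductor_le[OF ns]) simp
    with False \<open>e \<in> E\<close> show ?thesis by auto
  qed
qed

lemma mu_le_card:
  "finite S \<Longrightarrow> S \<subseteq> I \<Longrightarrow> ideal_gen R S = I \<Longrightarrow> mu R I \<le> card S"
  unfolding mu_def by (rule Least_le) blast

lemma mu_attained:
  assumes "finite S" "S \<subseteq> I" "ideal_gen R S = I"
  obtains T where "finite T" "T \<subseteq> I" "card T = mu R I" "ideal_gen R T = I"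
proof -
  have "\<exists>T. finite T \<and> T \<subseteq> I \<and> card T = mu R I \<and> ideal_gen R T = I"
    unfolding mu_def by (rule LeastI[of _ "card S"]) (use assms in blast)
  then show ?thesis using that by blast
qed

definition principal_semigroup_ideal :: "nat set \<Rightarrow> nat set \<Rightarrow> bool" where
  "principal_semigroup_ideal H E \<longleftrightarrow> (\<exists>b\<in>H. E = (+) b ` H)"

lemma monomial_if_dvd_least_monom:
  fixes p :: "'a::field poly"
  assumes p: "p \<in> monomial_span E" and a: "\<And>j. j \<in> E \<Longrightarrow> a \<le> j"
    and r: "r * p = monom 1 a"
  shows "p = monom (coeff p a) a"
proof (rule poly_eqI)
  fix j
  have "r \<noteq> 0" "p \<noteq> 0" using r by auto
  moreover have "degree (r * p) = a" unfolding r by (simp add: degree_monom_eq)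
  ultimately have "degree p \<le> a" by (simp add: degree_mult_eq)
  show "coeff p j = coeff (monom (coeff p a) a) j"
  proof (cases "j < a")
    case True
    then have "j \<notin> E" using a leD by blast
    with p True show ?thesis by (simp add: coeff_eq_0_if_notin_monomial_span)
  next
    case False
    then show ?thesis
      using \<open>degree p \<le> a\<close> by (cases "j = a") (simp_all add: coeff_eq_0)
  qed
qed

lemma principal_if_single_generator:
  fixes p :: "'a::field poly"
  assumes E: "semigroup_ideal H E" "E \<noteq> {}" and p: "p \<in> monomial_span E"
    and gen: "\<And>q. q \<in> monomial_span E \<Longrightarrow> \<exists>r\<in>monomial_span H. q = r * p"
  shows "principal_semigroup_ideal H E"
proof -
  define a where "a = (LEAST a. a \<in> E)"
  have a: "a \<in> E" using E(2) unfolding a_def by (auto intro: LeastI)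
  have a_min: "a \<le> j" if "j \<in> E" for j using that unfolding a_def by (rule Least_le)
  have "monom 1 a \<in> monomial_span E" using a by simp
  then obtain r where "monom 1 a = r * p" using gen by blast
  then have "r * p = monom 1 a" ..
  with p a_min have p_eq: "p = monom (coeff p a) a" by (rule monomial_if_dvd_least_monom)
  have divides: "a \<le> m \<and> m - a \<in> H" if "m \<in> E" for m
  proof -
    have "monom 1 m \<in> monomial_span E" using that by simp
    then obtain r' where r': "r' \<in> monomial_span H" "monom 1 m = r' * p"
      using gen by blast
    have "1 = coeff (monom 1 m :: 'a poly) m" by simp
    also have "\<dots> = coeff (monom (coeff p a) a * r') m"
      using r'(2) p_eq by (simp add: mult.commute)
    also have "\<dots> = (if m < a then 0 else coeff p a * coeff r' (m - a))"
      by (rule coeff_monom_mult)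
    finally have "\<not> m < a" "coeff r' (m - a) \<noteq> 0" by (auto split: if_splits)
    with r'(1) show ?thesis by (auto simp: monomial_span_def)
  qed
  have "E = (+) a ` H"
  proof
    show "E \<subseteq> (+) a ` H"
      using divides by (force intro: image_eqI)
    show "(+) a ` H \<subseteq> E"
      using E(1) a by (auto simp: semigroup_ideal_def)
  qed
  moreover have "a \<in> H" using E(1) a by (auto simp: semigroup_ideal_def)
  ultimately show ?thesis unfolding principal_semigroup_ideal_def by blast
qed

lemma principal_if_mu_le_1:
  assumes ns: "numerical_semigroup H" and E: "semigroup_ideal H E" "E \<noteq> {}"
    and mu: "mu (semigroup_ring H) (monomial_span E :: 'a::field poly set) \<le> 1"
  shows "principal_semigroup_ideal H E"
proof -
  obtain e where e: "e \<in> E" using E(2) by blast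
  obtain G where G: "finite G" "G \<subseteq> E" "\<And>m. m \<in> E \<Longrightarrow> \<exists>g\<in>G. g \<le> m \<and> m - g \<in> H"
    using semigroup_ideal_finite_cover[OF ns e] by blast
  have gen: "ideal_gen (semigroup_ring H) ((\<lambda>g. monom 1 g) ` G)
      = (monomial_span E :: 'a poly set)"
    by (rule ideal_gen_monoms[OF ns E(1) G])
  obtain S :: "'a poly set" where S: "finite S" "S \<subseteq> monomial_span E"
    "card S = mu (semigroup_ring H) (monomial_span E :: 'a poly set)"
    "ideal_gen (semigroup_ring H) S = monomial_span E"
    by (rule mu_attained[OF _ _ gen]) (use G in auto)
  have "S \<noteq> {}"
  proof
    assume "S = {}"
    then have "monomial_span E = {0 :: 'a poly}" using S(4) by (simp add: ideal_gen_def)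
    moreover have "monom (1::'a) e \<in> monomial_span E" using e by simp
    ultimately show False by simp
  qed
  with S(1) have "card S \<noteq> 0" by simp
  with S(3) mu have "card S = 1" by linarith
  then obtain p where p: "S = {p}" by (rule card_1_singletonE)
  have "\<exists>r\<in>monomial_span H. q = r * p" if "q \<in> monomial_span E" for q
    using that S(4) unfolding p ideal_gen_singleton semigroup_ring_eq_monomial_span by blast
  with S(2) p show ?thesis
    by (intro principal_if_single_generator[OF E, of p]) auto
qed

lemma mu_monomial_span_le_1_iff:
  assumes ns: "numerical_semigroup H" and E: "semigroup_ideal H E" "E \<noteq> {}"
  shows "mu (semigroup_ring H) (monomial_span E :: 'a::field poly set) \<le> 1
    \<longleftrightarrow> principal_semigroup_ideal H E"
proof
  assume "principal_semigroup_ideal H E"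
  then obtain b where b: "b \<in> H" "E = (+) b ` H"
    unfolding principal_semigroup_ideal_def by blast
  have bE: "b \<in> E" using b numerical_semigroup_zero[OF ns] by force
  have "ideal_gen (semigroup_ring H) ((\<lambda>g. monom 1 g) ` {b})
      = (monomial_span E :: 'a poly set)"
  proof (rule ideal_gen_monoms[OF ns E(1)])
    show "\<exists>g\<in>{b}. g \<le> m \<and> m - g \<in> H" if "m \<in> E" for m
      using that b by auto
  qed (use bE in auto)
  then have "mu (semigroup_ring H) (monomial_span E :: 'a poly set) \<le> card {monom (1::'a) b}"
    by (intro mu_le_card) (use bE in auto)
  then show "mu (semigroup_ring H) (monomial_span E :: 'a poly set) \<le> 1" by simp
qed (rule principal_if_mu_le_1[OF ns E])

section \<open>Socle and the Gorenstein property\<close>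

definition semigroup_socle :: "nat set \<Rightarrow> nat set \<Rightarrow> nat set" where
  "semigroup_socle H E = {h \<in> H. \<forall>m\<in>H. m \<noteq> 0 \<longrightarrow> h + m \<in> E}"

lemma socle_pre_monomial_span_subset:
  "socle_pre (semigroup_ring H) (monomial_span E)
    \<subseteq> (monomial_span (semigroup_socle H E) :: 'a::field poly set)"
proof
  fix p :: "'a poly" assume p: "p \<in> socle_pre (semigroup_ring H) (monomial_span E)"
  show "p \<in> monomial_span (semigroup_socle H E)" unfolding monomial_span_def
  proof (intro CollectI allI impI)
    fix j assume j: "coeff p j \<noteq> 0"
    have "j + m \<in> E" if "m \<in> H" "m \<noteq> 0" for m
    proof -
      have "monom (1::'a) m \<in> max_ideal (semigroup_ring H)"
        using that by (simp add: max_ideal_def semigroup_ring_eq_monomial_span)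
      then have "p * monom 1 m \<in> monomial_span E"
        using p by (simp add: socle_pre_def)
      moreover have "coeff (p * monom 1 m) (j + m) = coeff p j"
        by (simp add: mult.commute[of p] coeff_monom_mult)
      ultimately show ?thesis using j by (auto simp: monomial_span_def)
    qed
    moreover have "j \<in> H"
      using p j by (auto simp: socle_pre_def semigroup_ring_eq_monomial_span monomial_span_def)
    ultimately show "j \<in> semigroup_socle H E" by (simp add: semigroup_socle_def)
  qed
qed

lemma monomial_span_socle_subset_socle_pre:
  "monomial_span (semigroup_socle H E)
    \<subseteq> socle_pre (semigroup_ring H) (monomial_span E :: 'a::field poly set)"
proof
  fix p :: "'a poly" assume p: "p \<in> monomial_span (semigroup_socle H E)"
  have "p * q \<in> monomial_span E" if q: "q \<in> max_ideal (semigroup_ring H)" for q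
    unfolding monomial_span_def
  proof (intro CollectI allI impI)
    fix n assume "coeff (p * q) n \<noteq> 0"
    then obtain i where i: "i \<le> n" "coeff p i \<noteq> 0" "coeff q (n - i) \<noteq> 0"
      by (rule coeff_mult_neq_0_obtain)
    then have "i \<in> semigroup_socle H E" "n - i \<in> H" "n - i \<noteq> 0"
      using p q by (auto simp: monomial_span_def max_ideal_def semigroup_ring_eq_monomial_span)
    then have "i + (n - i) \<in> E" unfolding semigroup_socle_def by blast
    with i(1) show "n \<in> E" by simp
  qed
  moreover have "p \<in> semigroup_ring H"
    using p monomial_span_mono[of "semigroup_socle H E" H]
    by (auto simp: semigroup_socle_def semigroup_ring_eq_monomial_span)
  ultimately show "p \<in> socle_pre (semigroup_ring H) (monomial_span E)"
    by (simp add: socle_pre_def)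
qed

lemma socle_pre_monomial_span:
  "socle_pre (semigroup_ring H) (monomial_span E :: 'a::field poly set)
    = monomial_span (semigroup_socle H E)"
  by (rule equalityI[OF socle_pre_monomial_span_subset monomial_span_socle_subset_socle_pre])

lemma monomial_span_quotient_one_dim_iff:
  "(\<exists>s\<in>monomial_span T. s \<notin> monomial_span E
      \<and> (\<forall>p\<in>monomial_span T. \<exists>c. p - smult c s \<in> (monomial_span E :: 'a::field poly set)))
    \<longleftrightarrow> (\<exists>n. T - E = {n})"
proof
  assume "\<exists>s\<in>monomial_span T. s \<notin> monomial_span E
      \<and> (\<forall>p\<in>monomial_span T. \<exists>c. p - smult c s \<in> (monomial_span E :: 'a poly set))"
  then obtain s :: "'a poly" where s: "s \<in> monomial_span T" "s \<notin> monomial_span E"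
    and spans: "\<And>p. p \<in> monomial_span T \<Longrightarrow> \<exists>c. p - smult c s \<in> monomial_span E"
    by blast
  obtain n where n: "coeff s n \<noteq> 0" "n \<notin> E" using s(2) by (auto simp: monomial_span_def)
  with s(1) have "n \<in> T" by (auto simp: monomial_span_def)
  moreover have "n' = n" if n': "n' \<in> T" "n' \<notin> E" for n'
  proof (rule ccontr)
    assume "n' \<noteq> n"
    obtain c where "monom 1 n' - smult c s \<in> monomial_span E"
      using spans[of "monom 1 n'"] n' by auto
    then have "c * coeff s n' = 1"
      using coeff_eq_0_if_notin_monomial_span[of _ E n'] n' by fastforce
    obtain d where d: "monom 1 n - smult d s \<in> monomial_span E"
      using spans[of "monom 1 n"] \<open>n \<in> T\<close> by auto
    have "d * coeff s n = 1"
      using coeff_eq_0_if_notin_monomial_span[OF d n(2)] by simp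
    moreover have "d * coeff s n' = 0"
      using coeff_eq_0_if_notin_monomial_span[OF d n'(2)] \<open>n' \<noteq> n\<close> by simp
    ultimately show False using \<open>c * coeff s n' = 1\<close> by auto
  qed
  ultimately show "\<exists>n. T - E = {n}" using n(2) by blast
next
  assume "\<exists>n. T - E = {n}"
  then obtain n where n: "T - E = {n}" by blast
  have "p - smult (coeff p n) (monom 1 n) \<in> monomial_span E"
    if "p \<in> monomial_span T" for p :: "'a poly"
    using that n by (auto simp: monomial_span_def coeff_monom)
  moreover have "monom 1 n \<in> monomial_span T - (monomial_span E :: 'a poly set)"
    using n by auto
  ultimately show "\<exists>s\<in>monomial_span T. s \<notin> monomial_span E
      \<and> (\<forall>p\<in>monomial_span T. \<exists>c. p - smult c s \<in> (monomial_span E :: 'a poly set))"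
    by blast
qed

lemma gorenstein_quot_monomial_span_iff:
  "gorenstein_quot (semigroup_ring H) (monomial_span E :: 'a::field poly set)
    \<longleftrightarrow> (\<exists>n. semigroup_socle H E - E = {n})"
  unfolding gorenstein_quot_def socle_pre_monomial_span
  by (rule monomial_span_quotient_one_dim_iff)

definition nondivisors :: "nat set \<Rightarrow> nat \<Rightarrow> nat set" where
  "nondivisors H n = {h \<in> H. \<not> (h \<le> n \<and> n - h \<in> H)}"

lemma semigroup_ideal_nondivisors:
  assumes ns: "numerical_semigroup H"
  shows "semigroup_ideal H (nondivisors H n)"
  unfolding semigroup_ideal_def
proof (intro conjI subsetI ballI)
  fix h assume "h \<in> nondivisors H n"
  then show "h \<in> H" by (simp add: nondivisors_def)
next
  fix h k assume h: "h \<in> nondivisors H n" and k: "k \<in> H"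
  have "\<not> (h + k \<le> n \<and> n - (h + k) \<in> H)"
  proof
    assume hk: "h + k \<le> n \<and> n - (h + k) \<in> H"
    then have "n - (h + k) + k \<in> H" using numerical_semigroup_add[OF ns] k by blast
    moreover have "n - (h + k) + k = n - h" using hk by simp
    ultimately show False using h hk by (simp add: nondivisors_def)
  qed
  with h k numerical_semigroup_add[OF ns] show "h + k \<in> nondivisors H n"
    by (simp add: nondivisors_def)
qed

lemma socle_nondivisors:
  assumes ns: "numerical_semigroup H" and n: "n \<in> H"
  shows "semigroup_socle H (nondivisors H n) - nondivisors H n = {n}"
proof (intro equalityI subsetI)
  fix s assume s: "s \<in> semigroup_socle H (nondivisors H n) - nondivisors H n"
  then have "s \<le> n" "n - s \<in> H" by (auto simp: semigroup_socle_def nondivisors_def)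
  show "s \<in> {n}"
  proof (rule ccontr)
    assume "s \<notin> {n}"
    with \<open>s \<le> n\<close> have "n - s \<noteq> 0" by simp
    with s \<open>n - s \<in> H\<close> have "s + (n - s) \<in> nondivisors H n"
      unfolding semigroup_socle_def by blast
    with \<open>s \<le> n\<close> show False
      using numerical_semigroup_zero[OF ns] by (simp add: nondivisors_def)
  qed
next
  fix s assume "s \<in> {n}"
  then show "s \<in> semigroup_socle H (nondivisors H n) - nondivisors H n"
    using n numerical_semigroup_add[OF ns n] numerical_semigroup_zero[OF ns]
    by (auto simp: semigroup_socle_def nondivisors_def)
qed

lemma nondivisors_inject:
  assumes "numerical_semigroup H" "n \<in> H" "n' \<in> H"
  shows "nondivisors H n = nondivisors H n' \<longleftrightarrow> n = n'"
proof
  assume eq: "nondivisors H n = nondivisors H n'"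
  have "{n} = {n'}"
    using socle_nondivisors[OF assms(1,2)] socle_nondivisors[OF assms(1,3)] unfolding eq by simp
  then show "n = n'" by simp
qed simp

lemma nondivisors_nonempty:
  assumes "numerical_semigroup H"
  shows "nondivisors H n \<noteq> {}"
proof -
  have "n + 1 + conductor H \<in> nondivisors H n"
    using mem_if_conductor_le[OF assms, of "n + 1 + conductor H"] by (simp add: nondivisors_def)
  then show ?thesis by blast
qed

(* The largest multiple of h outside E exists since E contains all numbers from e + c on;
   by maximality it lies in the socle. *)
lemma divides_socle_element:
  assumes ns: "numerical_semigroup H" and E: "semigroup_ideal H E" "e \<in> E"
    and h: "h \<in> H" "h \<notin> E"
  obtains s where "s \<in> semigroup_socle H E" "s \<notin> E" "h \<le> s" "s - h \<in> H"
proof -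
  define T where "T = {x. h \<le> x \<and> x - h \<in> H \<and> x \<notin> E}"
  have "T \<subseteq> {..< e + conductor H}"
  proof
    fix x assume x: "x \<in> T"
    show "x \<in> {..< e + conductor H}"
    proof (rule ccontr)
      assume "x \<notin> {..< e + conductor H}"
      then have "x - e \<in> H" "x = e + (x - e)"
        using mem_if_conductor_le[OF ns, of "x - e"] by auto
      then have "x \<in> E" using E by (metis semigroup_ideal_def)
      with x show False by (simp add: T_def)
    qed
  qed
  then have "finite T" by (rule finite_subset) simp
  moreover have "h \<in> T" using h numerical_semigroup_zero[OF ns] by (simp add: T_def)
  ultimately have "Max T \<in> T" and s_max: "\<And>x. x \<in> T \<Longrightarrow> x \<le> Max T"
    by (auto intro: Max_in)
  then have s: "h \<le> Max T" "Max T - h \<in> H" "Max T \<notin> E" by (simp_all add: T_def)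
  have "Max T \<in> semigroup_socle H E"
    unfolding semigroup_socle_def
  proof (intro CollectI conjI ballI impI)
    have "h + (Max T - h) \<in> H" by (rule numerical_semigroup_add[OF ns h(1) s(2)])
    with s(1) show "Max T \<in> H" by simp
    fix m assume m: "m \<in> H" "m \<noteq> 0"
    show "Max T + m \<in> E"
    proof (rule ccontr)
      assume "Max T + m \<notin> E"
      moreover have "Max T + m - h = (Max T - h) + m" using s(1) by simp
      moreover have "(Max T - h) + m \<in> H" by (rule numerical_semigroup_add[OF ns s(2) m(1)])
      ultimately have "Max T + m \<in> T" using s(1) by (simp add: T_def)
      with s_max m(2) show False by fastforce
    qed
  qed
  with s that show ?thesis by blast
qed

lemma eq_nondivisors_if_socle:
  assumes ns: "numerical_semigroup H" and E: "semigroup_ideal H E"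
    and n: "semigroup_socle H E - E = {n}"
  shows "E = nondivisors H n"
proof (intro equalityI subsetI)
  fix h assume h: "h \<in> E"
  have "h \<in> H" using E h by (auto simp: semigroup_ideal_def)
  moreover have "\<not> (h \<le> n \<and> n - h \<in> H)"
  proof
    assume "h \<le> n \<and> n - h \<in> H"
    then have "h + (n - h) \<in> E" using h E unfolding semigroup_ideal_def by blast
    moreover have "n \<notin> E" using n by (metis Diff_iff singletonI)
    ultimately show False using \<open>h \<le> n \<and> n - h \<in> H\<close> by simp
  qed
  ultimately show "h \<in> nondivisors H n" by (simp add: nondivisors_def)
next
  fix h assume h: "h \<in> nondivisors H n"
  show "h \<in> E"
  proof (rule ccontr)
    assume "h \<notin> E"
    have "n \<in> semigroup_socle H E" using n by (metis Diff_iff singletonI)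
    then have socle: "\<forall>m\<in>H. m \<noteq> 0 \<longrightarrow> n + m \<in> E" by (simp add: semigroup_socle_def)
    have "conductor H + 1 \<in> H" by (rule mem_if_conductor_le[OF ns]) simp
    then have e: "n + (conductor H + 1) \<in> E" by (rule socle[rule_format]) simp
    have "h \<in> H" using h by (simp add: nondivisors_def)
    then obtain s where s: "s \<in> semigroup_socle H E" "s \<notin> E" "h \<le> s" "s - h \<in> H"
      using \<open>h \<notin> E\<close> by (rule divides_socle_element[OF ns E e])
    have "s = n" using s(1,2) n by (metis Diff_iff singletonD)
    with s(3,4) h show False by (simp add: nondivisors_def)
  qed
qed

lemma graded_gorenstein_iff_nondivisors:
  fixes I :: "'a::field poly set"
  assumes ns: "numerical_semigroup H"
  shows "graded_ideal (semigroup_ring H) I \<and> gorenstein_quot (semigroup_ring H) I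
    \<longleftrightarrow> (\<exists>n\<in>H. I = monomial_span (nondivisors H n))"
proof
  assume "graded_ideal (semigroup_ring H) I \<and> gorenstein_quot (semigroup_ring H) I"
  then obtain E where E: "semigroup_ideal H E" "I = monomial_span E"
    and "gorenstein_quot (semigroup_ring H) I"
    using graded_ideal_iff_monomial_span[OF ns] by blast
  then obtain n where n: "semigroup_socle H E - E = {n}"
    using gorenstein_quot_monomial_span_iff by blast
  then have "n \<in> H" by (auto simp: semigroup_socle_def)
  with E(2) eq_nondivisors_if_socle[OF ns E(1) n]
  show "\<exists>n\<in>H. I = monomial_span (nondivisors H n)" by blast
next
  assume "\<exists>n\<in>H. I = monomial_span (nondivisors H n)"
  then obtain n where n: "n \<in> H" and I: "I = monomial_span (nondivisors H n)" by blast
  note E = semigroup_ideal_nondivisors[OF ns, of n]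
  show "graded_ideal (semigroup_ring H) I \<and> gorenstein_quot (semigroup_ring H) I"
    unfolding I graded_ideal_iff_monomial_span[OF ns] gorenstein_quot_monomial_span_iff
    using E socle_nondivisors[OF ns n] by blast
qed

section \<open>Principal Gorenstein ideals and the count\<close>

(* With F = c - 1 the Frobenius number, n + 1 - c is n - F; this form also covers c = 0,
   where H = N and every ideal is principal. *)
lemma conductor_le_if_principal_nondivisors:
  assumes ns: "numerical_semigroup H" and n: "n \<in> H"
    and "principal_semigroup_ideal H (nondivisors H n)"
  shows "conductor H \<le> n + 1 \<and> n + 1 - conductor H \<in> H"
proof (cases "conductor H = 0")
  case True
  then show ?thesis using mem_if_conductor_le[OF ns] by simp
next
  case False
  define F where "F = conductor H - 1"
  have F: "F \<notin> H" using frobenius_not_mem[OF ns] False by (simp add: F_def)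
  have above_F: "F + m \<in> H" if "m \<noteq> 0" for m
    using that by (intro mem_if_conductor_le[OF ns]) (simp add: F_def)
  obtain b where b: "b \<in> H" "nondivisors H n = (+) b ` H"
    using assms(3) unfolding principal_semigroup_ideal_def by blast
  have "b \<in> nondivisors H n" using b numerical_semigroup_zero[OF ns] by force
  have "b \<noteq> 0"
  proof
    assume "b = 0"
    with \<open>b \<in> nondivisors H n\<close> n show False by (simp add: nondivisors_def)
  qed
  have "b + F \<notin> nondivisors H n"
  proof
    assume "b + F \<in> nondivisors H n"
    then have "F \<in> H" using b by auto
    with F show False by simp
  qed
  moreover have "b + F \<in> semigroup_socle H (nondivisors H n)"
    unfolding semigroup_socle_def
  proof (intro CollectI conjI ballI impI)
    show "b + F \<in> H" using above_F[OF \<open>b \<noteq> 0\<close>] by (simp add: add.commute)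
    fix m assume "m \<in> H" "m \<noteq> 0"
    then have "b + (F + m) \<in> nondivisors H n" using b above_F by blast
    then show "b + F + m \<in> nondivisors H n" by (simp add: add.assoc)
  qed
  ultimately have "b + F = n" using socle_nondivisors[OF ns n] by blast
  then have "conductor H \<le> n + 1" "n + 1 - conductor H = b"
    using False unfolding F_def by arith+
  with b(1) show ?thesis by simp
qed

lemma principal_nondivisors_if_conductor_le:
  assumes ns: "numerical_semigroup H" and sym: "symmetric_sg H"
    and c: "conductor H \<le> n + 1" and e: "n + 1 - conductor H \<in> H"
  shows "principal_semigroup_ideal H (nondivisors H n)"
proof -
  define e where "e = n + 1 - conductor H"
  have e_div: "e \<in> nondivisors H n"
  proof -
    have "n - e \<notin> H" if "e \<le> n"
      using that c frobenius_not_mem[OF ns] by (simp add: e_def)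
    with assms(4) show ?thesis by (auto simp: nondivisors_def e_def)
  qed
  have "nondivisors H n \<subseteq> (+) e ` H"
  proof
    fix m assume m: "m \<in> nondivisors H n"
    have "e \<le> m \<and> m - e \<in> H"
    proof (cases "m \<le> n")
      case True
      with m have "n - m \<notin> H" by (simp add: nondivisors_def)
      then have "n - m \<le> conductor H - 1" "conductor H - 1 - (n - m) \<in> H"
        using symmetric_sg_gap_reflect[OF ns sym] by blast+
      moreover have "0 < conductor H" using gap_less_conductor[OF ns \<open>n - m \<notin> H\<close>] by simp
      ultimately have "e \<le> m" "m - e = conductor H - 1 - (n - m)"
        using True c unfolding e_def by arith+
      with \<open>conductor H - 1 - (n - m) \<in> H\<close> show ?thesis by simp
    next
      case False
      then have "conductor H \<le> m - e" using c by (simp add: e_def)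
      with False c show ?thesis using mem_if_conductor_le[OF ns] by (simp add: e_def)
    qed
    then show "m \<in> (+) e ` H" by (intro image_eqI[of _ _ "m - e"]) simp_all
  qed
  moreover have "(+) e ` H \<subseteq> nondivisors H n"
    using e_div semigroup_ideal_nondivisors[OF ns, of n] by (auto simp: semigroup_ideal_def)
  ultimately show ?thesis
    using assms(4) unfolding principal_semigroup_ideal_def e_def by blast
qed

lemma two_le_mu_nondivisors_iff:
  assumes ns: "numerical_semigroup H" and sym: "symmetric_sg H" and n: "n \<in> H"
  shows "2 \<le> mu (semigroup_ring H) (monomial_span (nondivisors H n) :: 'a::field poly set)
    \<longleftrightarrow> \<not> (conductor H \<le> n + 1 \<and> n + 1 - conductor H \<in> H)"
proof -
  let ?mu = "mu (semigroup_ring H) (monomial_span (nondivisors H n) :: 'a poly set)"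
  have "2 \<le> ?mu \<longleftrightarrow> \<not> ?mu \<le> 1" by linarith
  also have "\<dots> \<longleftrightarrow> \<not> principal_semigroup_ideal H (nondivisors H n)"
    using mu_monomial_span_le_1_iff[OF ns semigroup_ideal_nondivisors[OF ns]
        nondivisors_nonempty[OF ns]]
    by simp
  also have "\<dots> \<longleftrightarrow> \<not> (conductor H \<le> n + 1 \<and> n + 1 - conductor H \<in> H)"
    using conductor_le_if_principal_nondivisors[OF ns n]
      principal_nondivisors_if_conductor_le[OF ns sym] by blast
  finally show ?thesis .
qed

lemma nonprincipal_eq_below_conductor_Un_shifted_gaps:
  assumes ns: "numerical_semigroup H"
  shows "{n \<in> H. \<not> (conductor H \<le> n + 1 \<and> n + 1 - conductor H \<in> H)}
    = {n \<in> H. n < conductor H} \<union> (\<lambda>g. g + (conductor H - 1)) ` (UNIV - H)"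
    (is "?N = ?A \<union> ?B")
proof (intro equalityI subsetI)
  fix n assume "n \<in> ?N"
  then have n: "n \<in> H" "\<not> (conductor H \<le> n + 1 \<and> n + 1 - conductor H \<in> H)" by simp_all
  show "n \<in> ?A \<union> ?B"
  proof (cases "n < conductor H")
    case False
    then have "n + 1 - conductor H \<notin> H" using n(2) by simp
    moreover from this have "n = (n + 1 - conductor H) + (conductor H - 1)"
      using gap_less_conductor[OF ns] False by fastforce
    ultimately show ?thesis by blast
  qed (use n in simp)
next
  fix n assume "n \<in> ?A \<union> ?B"
  then show "n \<in> ?N"
  proof
    assume "n \<in> ?A"
    then have n: "n \<in> H" "n < conductor H" by simp_all
    have "\<not> conductor H \<le> n + 1"
    proof
      assume "conductor H \<le> n + 1"
      with n have "n = conductor H - 1" "0 < conductor H" by simp_all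
      with n(1) frobenius_not_mem[OF ns] show False by simp
    qed
    with n(1) show ?thesis by simp
  next
    assume "n \<in> ?B"
    then obtain g where g: "g \<notin> H" "n = g + (conductor H - 1)" by blast
    moreover have "0 < g" using g(1) numerical_semigroup_zero[OF ns] by (cases g) auto
    moreover have "g < conductor H" using gap_less_conductor[OF ns g(1)] .
    ultimately have "conductor H \<le> n" "n + 1 - conductor H = g" by arith+
    then show ?thesis using g(1) mem_if_conductor_le[OF ns] by simp
  qed
qed

lemma card_nonprincipal_nondivisors:
  assumes ns: "numerical_semigroup H"
  defines "N \<equiv> {n \<in> H. \<not> (conductor H \<le> n + 1 \<and> n + 1 - conductor H \<in> H)}"
  shows "finite N \<and> card N = conductor H"
proof -
  define A where "A = {n \<in> H. n < conductor H}"
  define B where "B = (\<lambda>g. g + (conductor H - 1)) ` (UNIV - H)"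
  have "N = A \<union> B"
    unfolding N_def A_def B_def by (rule nonprincipal_eq_below_conductor_Un_shifted_gaps[OF ns])
  moreover have "A \<inter> B = {}"
  proof -
    have "conductor H \<le> g + (conductor H - 1)" if "g \<notin> H" for g
      using that numerical_semigroup_zero[OF ns] by (cases g) auto
    then show ?thesis by (force simp: A_def B_def)
  qed
  moreover have "finite (UNIV - H)" using ns by (simp add: numerical_semigroup_def)
  moreover have "card B = card (UNIV - H)"
    unfolding B_def by (rule card_image) (simp add: inj_on_def)
  ultimately show ?thesis
    using card_below_conductor_plus_gaps[OF ns] by (simp add: A_def B_def card_Un_disjoint)
qed

theorem theorem1p2:
  fixes H :: "nat set"
  assumes "numerical_semigroup H"
    and "symmetric_sg H"
  shows "finite {I :: 'a::field poly set.
            graded_ideal (semigroup_ring H) I \<and> gorenstein_quot (semigroup_ring H) I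
            \<and> mu (semigroup_ring H) I \<ge> 2}
       \<and> card {I :: 'a::field poly set.
            graded_ideal (semigroup_ring H) I \<and> gorenstein_quot (semigroup_ring H) I
            \<and> mu (semigroup_ring H) I \<ge> 2} = conductor H"
proof -
  define N where "N = {n \<in> H. \<not> (conductor H \<le> n + 1 \<and> n + 1 - conductor H \<in> H)}"
  let ?I = "\<lambda>n. monomial_span (nondivisors H n) :: 'a poly set"
  have "{I :: 'a poly set. graded_ideal (semigroup_ring H) I \<and> gorenstein_quot (semigroup_ring H) I
            \<and> mu (semigroup_ring H) I \<ge> 2}
      = {I. (\<exists>n\<in>H. I = ?I n) \<and> 2 \<le> mu (semigroup_ring H) I}"
    by (simp only: conj_assoc[symmetric] graded_gorenstein_iff_nondivisors[OF assms(1)])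
  also have "\<dots> = ?I ` N"
    using two_le_mu_nondivisors_iff[OF assms, where 'a = 'a] by (auto simp: N_def)
  moreover have "inj_on ?I N"
    by (rule inj_onI) (simp add: N_def monomial_span_inject nondivisors_inject[OF assms(1)])
  ultimately show ?thesis
    using card_nonprincipal_nondivisors[OF assms(1)] by (simp add: N_def card_image)
qed

end
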